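(* Consider a nonrelativistic quantum system with one degree of freedom and Hamiltonian $$H(\hat q,\hat p)=\frac{\hat p^2}{2m}+\tfrac12 c(\hat q\hat p+\hat p\hat q)+\xi_p\hat p+U(\hat q),$$ with $m>0$, $c,\xi_p\in\mathbb R$ and $U$ a real function. Suppose the system is in a pure state with wave function $\psi(q,t)=\Omega(q,t)e^{iS(q,t)/\hbar}$, $\Omega=|\psi|$. Let $\Delta q^2$ and $\Delta p^2$ be the variances of position and momentum in this state, and let $\mathrm{Cov}(\partial_qS,\partial_qS)=\langle(\partial_qS)^2\rangle-\langle\partial_qS\rangle^2$ with means taken with respect to $\Omega^2dq$. Then $$\Delta p^2\Delta q^2-\mathrm{Cov}(\partial_qS,\partial_qS)\,\Delta q^2-\frac{\hbar^2}{4}\ \ge\ 0 .$$ Moreover, this inequality is stronger than the Robertson–Schrödinger uncertainty relation $$\Delta q^2\Delta p^2-[\mathrm{Cov}(q,p)]^2-\frac{\hbar^2}{4}\ge 0,$$ in the sense that it is a sufficient but not necessary condition for it.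
   Context: The amplitude $\Omega$ is assumed continuous and twice continuously differentiable, with $\int_{\mathbb R}\Omega^2dq=1$ and $\Omega\to0$ as $|q|\to\infty$. Variances are $\Delta q^2=\langle\psi|\hat q^2|\psi\rangle-\langle\psi|\hat q|\psi\rangle^2$, $\Delta p^2=\langle\psi|\hat p^2|\psi\rangle-\langle\psi|\hat p|\psi\rangle^2$, and the symmetrized position–momentum covariance is $\mathrm{Cov}(q,p)=\tfrac12\langle\psi|\hat q\hat p+\hat p\hat q|\psi\rangle-\langle\psi|\hat q|\psi\rangle\langle\psi|\hat p|\psi\rangle$. *)

theory Defs
  imports "HOL-Analysis.Analysis" "HOL-Library.Complex_Order"
begin

definition wavefun :: "real \<Rightarrow> (real \<Rightarrow> real) \<Rightarrow> (real \<Rightarrow> real) \<Rightarrow> real \<Rightarrow> complex" where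
  "wavefun hbar \<Omega> S q = complex_of_real (\<Omega> q) * exp (\<i> * complex_of_real (S q / hbar))"

definition qop :: "(real \<Rightarrow> complex) \<Rightarrow> real \<Rightarrow> complex" where
  "qop f q = complex_of_real q * f q"

definition pop :: "real \<Rightarrow> (real \<Rightarrow> complex) \<Rightarrow> real \<Rightarrow> complex" where
  "pop hbar f q = - \<i> * complex_of_real hbar * vector_derivative f (at q)"

definition expect :: "(real \<Rightarrow> complex) \<Rightarrow> ((real \<Rightarrow> complex) \<Rightarrow> real \<Rightarrow> complex) \<Rightarrow> complex" where
  "expect \<psi> A = (LINT q|lborel. cnj (\<psi> q) * A \<psi> q)"

definition varq :: "(real \<Rightarrow> complex) \<Rightarrow> complex" where
  "varq \<psi> = expect \<psi> (\<lambda>f. qop (qop f)) - (expect \<psi> qop)\<^sup>2"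

definition varp :: "real \<Rightarrow> (real \<Rightarrow> complex) \<Rightarrow> complex" where
  "varp hbar \<psi> = expect \<psi> (\<lambda>f. pop hbar (pop hbar f)) - (expect \<psi> (pop hbar))\<^sup>2"

definition covqp :: "real \<Rightarrow> (real \<Rightarrow> complex) \<Rightarrow> complex" where
  "covqp hbar \<psi> = expect \<psi> (\<lambda>f q. qop (pop hbar f) q + pop hbar (qop f) q) / 2
                    - expect \<psi> qop * expect \<psi> (pop hbar)"

definition mean_Omega :: "(real \<Rightarrow> real) \<Rightarrow> (real \<Rightarrow> real) \<Rightarrow> real" where
  "mean_Omega \<Omega> g = (LINT q|lborel. (\<Omega> q)\<^sup>2 * g q)"

definition cov_dS :: "(real \<Rightarrow> real) \<Rightarrow> (real \<Rightarrow> real) \<Rightarrow> real" where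
  "cov_dS \<Omega> S = mean_Omega \<Omega> (\<lambda>q. (deriv S q)\<^sup>2) - (mean_Omega \<Omega> (deriv S))\<^sup>2"

definition admissible :: "real \<Rightarrow> (real \<Rightarrow> real) \<Rightarrow> (real \<Rightarrow> real) \<Rightarrow> bool" where
  "admissible hbar \<Omega> S \<longleftrightarrow>
     (\<forall>q. \<Omega> differentiable at q) \<and> (\<forall>q. deriv \<Omega> differentiable at q) \<and>
     continuous_on UNIV (deriv (deriv \<Omega>)) \<and>
     (\<forall>q. S differentiable at q) \<and> (\<forall>q. deriv S differentiable at q) \<and>
     continuous_on UNIV (deriv (deriv S)) \<and>
     has_bochner_integral lborel (\<lambda>q. (\<Omega> q)\<^sup>2) 1 \<and>
     (\<Omega> \<longlongrightarrow> 0) at_top \<and> (\<Omega> \<longlongrightarrow> 0) at_bot \<and>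
     integrable lborel (\<lambda>q. q\<^sup>2 * (\<Omega> q)\<^sup>2) \<and>
     integrable lborel (\<lambda>q. (norm (vector_derivative (wavefun hbar \<Omega> S) (at q)))\<^sup>2) \<and>
     integrable lborel (\<lambda>q. cnj (wavefun hbar \<Omega> S q) * pop hbar (pop hbar (wavefun hbar \<Omega> S)) q)"

end

theory Submission
  imports Defs "HOL-Probability.Distributions" "HOL-Real_Asymp.Real_Asymp"
begin

(* Writing \<psi> = \<Omega> e^(iS/hbar), every moment of q and p becomes a moment of the density \<Omega>^2:
   <q> and <q^2> directly, <p> = <S'>, <(qp + pq)/2> = <q S'>, and after one integration by parts
   <p^2> = hbar^2 \<integral>\<Omega>'^2 + <S'^2>. Hence Var p = hbar^2 \<integral>\<Omega>'^2 + Cov(S',S') and Cov(q,p) = Cov(q,S').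
   The first inequality is then the uncertainty relation Var q \<integral>\<Omega>'^2 \<ge> 1/4 of the real amplitude, and
   the comparison with the Robertson-Schroedinger relation is Cauchy-Schwarz for Cov(q,S'). For a
   Gaussian amplitude with S = q^3/3 the variable S' = q^2 is uncorrelated with q but has variance 2,
   so the comparison is strict. *)

lemma emeasure_lborel_Ici: "emeasure lborel {a::real..} = \<infinity>"
proof (rule ccontr)
  assume "emeasure lborel {a..} \<noteq> \<infinity>"
  then obtain r where r: "emeasure lborel {a..} = ennreal r" "r \<ge> 0"
    by (cases "emeasure lborel {a..}" rule: ennreal_cases) auto
  have "emeasure lborel {a..a + (r + 1)} \<le> emeasure lborel {a..}"
    by (rule emeasure_mono) auto
  with r show False
    by (simp add: ennreal_le_iff)
qed

lemma integrable_lborel_tendsto_at_top_eq_0: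
  fixes F :: "real \<Rightarrow> 'a::{banach, second_countable_topology}"
  assumes F: "integrable lborel F" and lim: "(F \<longlongrightarrow> A) at_top"
  shows "A = 0"
proof (rule ccontr)
  assume "A \<noteq> 0"
  define c where "c = norm A / 2"
  have c: "c > 0" using \<open>A \<noteq> 0\<close> by (simp add: c_def)
  have "\<forall>\<^sub>F x in at_top. c < norm (F x)"
    using tendsto_norm[OF lim] c unfolding c_def by (intro order_tendstoD(1)) auto
  then obtain R where R: "\<And>x. x \<ge> R \<Longrightarrow> c < norm (F x)"
    by (auto simp: eventually_at_top_linorder)
  have "integrable lborel (\<lambda>x. indicator {R..} x * c)"
  proof (rule Bochner_Integration.integrable_bound[OF F])
    show "AE x in lborel. norm (indicator {R..} x * c) \<le> norm (F x)"
      using R c by (auto simp: indicator_def less_imp_le)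
  qed simp
  then have "integrable lborel (indicator {R..} :: real \<Rightarrow> real)"
    using c by simp
  then show False
    by (simp add: integrable_indicator_iff emeasure_lborel_Ici)
qed

lemma integrable_lborel_tendsto_at_bot_eq_0:
  fixes F :: "real \<Rightarrow> 'a::{banach, second_countable_topology}"
  assumes F: "integrable lborel F" and lim: "(F \<longlongrightarrow> A) at_bot"
  shows "A = 0"
proof (rule integrable_lborel_tendsto_at_top_eq_0)
  show "integrable lborel (\<lambda>x. F (- x))"
    using lborel_integrable_real_affine_iff[of "-1" F 0] F by simp
  show "((\<lambda>x. F (- x)) \<longlongrightarrow> A) at_top"
    using lim by (simp add: filterlim_at_bot_mirror)
qed

(* By the fundamental theorem of calculus F has limits at both ends of the line; integrability
   of F forces both limits to vanish. *)
lemma integral_lborel_vector_derivative_eq_0: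
  fixes F f :: "real \<Rightarrow> 'a::euclidean_space"
  assumes F': "\<And>x. (F has_vector_derivative f x) (at x)"
    and f: "integrable lborel f" and F: "integrable lborel F"
  shows "integral\<^sup>L lborel f = 0"
proof -
  have si: "set_integrable lborel A f" if "A \<in> sets lborel" for A
    unfolding set_integrable_def using integrable_mult_indicator[OF that f] .
  have FTC: "(LINT x:{a..b}|lborel. f x) = F b - F a" if "a \<le> b" for a b
  proof -
    have "(f has_integral (F b - F a)) {a..b}"
      using that by (intro fundamental_theorem_of_calculus) (auto intro: has_vector_derivative_at_within F')
    moreover have "(LINT x:{a..b}|lborel. f x) = integral {a..b} f"
      by (rule set_borel_integral_eq_integral(2)[OF si]) simp
    ultimately show ?thesis
      by (simp add: integral_unique)
  qed
  have "((\<lambda>b. LINT x:{0..b}|lborel. f x) \<longlongrightarrow> (LINT x:{0..}|lborel. f x)) at_top"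
    by (rule tendsto_set_lebesgue_integral_at_top) (auto intro: si)
  moreover have "\<forall>\<^sub>F b in at_top. (LINT x:{0..b}|lborel. f x) = F b - F 0"
    using FTC by (auto simp: eventually_at_top_linorder)
  ultimately have "((\<lambda>b. F 0 + (F b - F 0)) \<longlongrightarrow> F 0 + (LINT x:{0..}|lborel. f x)) at_top"
    by (intro tendsto_add tendsto_const) (rule Lim_transform_eventually)
  then have right: "F 0 + (LINT x:{0..}|lborel. f x) = 0"
    by (intro integrable_lborel_tendsto_at_top_eq_0[OF F]) simp
  have "((\<lambda>a. LINT x:{a..0}|lborel. f x) \<longlongrightarrow> (LINT x:{..0}|lborel. f x)) at_bot"
    by (rule tendsto_set_lebesgue_integral_at_bot) (auto intro: si)
  moreover have "\<forall>\<^sub>F a in at_bot. (LINT x:{a..0}|lborel. f x) = F 0 - F a"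
    using FTC by (auto simp: eventually_at_bot_linorder)
  ultimately have "((\<lambda>a. F 0 - (F 0 - F a)) \<longlongrightarrow> F 0 - (LINT x:{..0}|lborel. f x)) at_bot"
    by (intro tendsto_diff tendsto_const) (rule Lim_transform_eventually)
  then have left: "F 0 - (LINT x:{..0}|lborel. f x) = 0"
    by (intro integrable_lborel_tendsto_at_bot_eq_0[OF F]) simp
  have "(LINT x:{..0} \<union> {0..}|lborel. f x) = (LINT x:{..0}|lborel. f x) + (LINT x:{0..}|lborel. f x)"
    by (rule set_integral_Un_AE) (auto intro!: si AE_I' [of "{0}"])
  moreover have "{..0} \<union> {0..} = (UNIV :: real set)" by auto
  ultimately show ?thesis
    using left right by (simp add: set_lebesgue_integral_def algebra_simps)
qed

lemma integrable_mult_of_square_integrable: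
  fixes u v :: "'a \<Rightarrow> real"
  assumes "u \<in> borel_measurable M" "v \<in> borel_measurable M"
    and "integrable M (\<lambda>x. (u x)\<^sup>2)" "integrable M (\<lambda>x. (v x)\<^sup>2)"
  shows "integrable M (\<lambda>x. u x * v x)"
proof (rule Bochner_Integration.integrable_bound)
  show "integrable M (\<lambda>x. (u x)\<^sup>2 + (v x)\<^sup>2)"
    using assms by simp
  have "\<bar>u x * v x\<bar> \<le> (u x)\<^sup>2 + (v x)\<^sup>2" for x
  proof -
    have "2 * (\<bar>u x\<bar> * \<bar>v x\<bar>) \<le> (u x)\<^sup>2 + (v x)\<^sup>2"
      using sum_squares_bound[of "\<bar>u x\<bar>" "\<bar>v x\<bar>"] by (simp add: mult.assoc)
    moreover have "0 \<le> \<bar>u x\<bar> * \<bar>v x\<bar>" by simp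
    ultimately show ?thesis unfolding abs_mult by linarith
  qed
  then show "AE x in M. norm (u x * v x) \<le> norm ((u x)\<^sup>2 + (v x)\<^sup>2)"
    by simp
qed (use assms in simp)

lemma has_bochner_integral_Cauchy_Schwarz:
  fixes u v :: "'a \<Rightarrow> real"
  assumes "has_bochner_integral M (\<lambda>x. (u x)\<^sup>2) A" "has_bochner_integral M (\<lambda>x. u x * v x) B"
    and "has_bochner_integral M (\<lambda>x. (v x)\<^sup>2) C"
  shows "B\<^sup>2 \<le> A * C"
proof -
  have quadratic: "0 \<le> A * t\<^sup>2 + 2 * B * t + C" for t
  proof -
    have "has_bochner_integral M (\<lambda>x. t\<^sup>2 * (u x)\<^sup>2 + (2 * t) * (u x * v x) + (v x)\<^sup>2)
        (t\<^sup>2 * A + (2 * t) * B + C)"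
      by (intro has_bochner_integral_add has_bochner_integral_mult_right assms)
    moreover have "(\<lambda>x. t\<^sup>2 * (u x)\<^sup>2 + (2 * t) * (u x * v x) + (v x)\<^sup>2) = (\<lambda>x. (t * u x + v x)\<^sup>2)"
      by (simp add: fun_eq_iff power2_eq_square algebra_simps)
    ultimately have "A * t\<^sup>2 + 2 * B * t + C = (\<integral>x. (t * u x + v x)\<^sup>2 \<partial>M)"
      by (auto dest: has_bochner_integral_integral_eq simp: algebra_simps)
    then show ?thesis by simp
  qed
  have "0 \<le> A"
    using has_bochner_integral_integral_eq[OF assms(1)] by (metis integral_nonneg_AE AE_I2 zero_le_power2)
  show ?thesis
  proof (cases "A = 0")
    case True
    with quadratic[of "- (C + 1) / (2 * B)"] show ?thesis
      by (cases "B = 0") (auto simp: field_simps)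
  next
    case False
    with quadratic[of "- B / A"] \<open>0 \<le> A\<close> show ?thesis
      by (simp add: field_simps power2_eq_square)
  qed
qed

definition cov_Omega :: "(real \<Rightarrow> real) \<Rightarrow> (real \<Rightarrow> real) \<Rightarrow> (real \<Rightarrow> real) \<Rightarrow> real" where
  "cov_Omega \<Omega> f g = mean_Omega \<Omega> (\<lambda>q. f q * g q) - mean_Omega \<Omega> f * mean_Omega \<Omega> g"

lemma cov_dS_eq_cov_Omega: "cov_dS \<Omega> S = cov_Omega \<Omega> (deriv S) (deriv S)"
  by (simp add: cov_dS_def cov_Omega_def power2_eq_square)

lemma has_bochner_integral_cov_Omega:
  assumes "has_bochner_integral lborel (\<lambda>q. (\<Omega> q)\<^sup>2) 1"
    and "integrable lborel (\<lambda>q. (\<Omega> q)\<^sup>2 * f q)" "integrable lborel (\<lambda>q. (\<Omega> q)\<^sup>2 * g q)"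
    and "integrable lborel (\<lambda>q. (\<Omega> q)\<^sup>2 * (f q * g q))"
  shows "has_bochner_integral lborel
    (\<lambda>q. ((f q - mean_Omega \<Omega> f) * \<Omega> q) * ((g q - mean_Omega \<Omega> g) * \<Omega> q)) (cov_Omega \<Omega> f g)"
proof -
  define a b where "a = mean_Omega \<Omega> f" and "b = mean_Omega \<Omega> g"
  have "has_bochner_integral lborel
      (\<lambda>q. (\<Omega> q)\<^sup>2 * (f q * g q) - b * ((\<Omega> q)\<^sup>2 * f q) - a * ((\<Omega> q)\<^sup>2 * g q) + (a * b) * (\<Omega> q)\<^sup>2)
      (mean_Omega \<Omega> (\<lambda>q. f q * g q) - b * a - a * b + (a * b) * 1)"
    unfolding a_def b_def mean_Omega_def
    by (intro has_bochner_integral_add has_bochner_integral_diff has_bochner_integral_mult_right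
        has_bochner_integral_integrable assms)
  moreover have "(\<lambda>q. (\<Omega> q)\<^sup>2 * (f q * g q) - b * ((\<Omega> q)\<^sup>2 * f q) - a * ((\<Omega> q)\<^sup>2 * g q) + (a * b) * (\<Omega> q)\<^sup>2)
      = (\<lambda>q. ((f q - a) * \<Omega> q) * ((g q - b) * \<Omega> q))"
    by (simp add: fun_eq_iff power2_eq_square algebra_simps)
  ultimately show ?thesis
    by (simp add: a_def b_def cov_Omega_def)
qed

lemma cov_Omega_sq_le:
  assumes "has_bochner_integral lborel (\<lambda>q. (\<Omega> q)\<^sup>2) 1"
    and "integrable lborel (\<lambda>q. (\<Omega> q)\<^sup>2 * f q)" "integrable lborel (\<lambda>q. (\<Omega> q)\<^sup>2 * g q)"
    and "integrable lborel (\<lambda>q. (\<Omega> q)\<^sup>2 * (f q * f q))"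
    and "integrable lborel (\<lambda>q. (\<Omega> q)\<^sup>2 * (g q * g q))"
    and "integrable lborel (\<lambda>q. (\<Omega> q)\<^sup>2 * (f q * g q))"
  shows "(cov_Omega \<Omega> f g)\<^sup>2 \<le> cov_Omega \<Omega> f f * cov_Omega \<Omega> g g"
  by (rule has_bochner_integral_Cauchy_Schwarz
      [OF has_bochner_integral_cov_Omega[of \<Omega> f f, unfolded power2_eq_square[symmetric]]
          has_bochner_integral_cov_Omega[of \<Omega> f g]
          has_bochner_integral_cov_Omega[of \<Omega> g g, unfolded power2_eq_square[symmetric]]])
     (use assms in \<open>simp_all add: power2_eq_square\<close>)

locale normalized_amplitude =
  fixes \<Omega> \<Omega>' :: "real \<Rightarrow> real"
  assumes has_derivative_amplitude: "\<And>q. (\<Omega> has_real_derivative \<Omega>' q) (at q)"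
    and continuous_derivative: "continuous_on UNIV \<Omega>'"
    and normalized: "has_bochner_integral lborel (\<lambda>q. (\<Omega> q)\<^sup>2) 1"
    and integrable_position_sq: "integrable lborel (\<lambda>q. q\<^sup>2 * (\<Omega> q)\<^sup>2)"
    and integrable_derivative_sq: "integrable lborel (\<lambda>q. (\<Omega>' q)\<^sup>2)"
begin

lemma continuous_amplitude: "continuous_on UNIV \<Omega>"
  by (rule continuous_at_imp_continuous_on) (auto intro: DERIV_isCont has_derivative_amplitude)

lemma borel_measurable_amplitude [measurable]: "\<Omega> \<in> borel_measurable borel"
  by (rule borel_measurable_continuous_onI[OF continuous_amplitude])

lemma borel_measurable_derivative [measurable]: "\<Omega>' \<in> borel_measurable borel"
  by (rule borel_measurable_continuous_onI[OF continuous_derivative])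

lemma integrable_amplitude_sq: "integrable lborel (\<lambda>q. (\<Omega> q)\<^sup>2)"
  using normalized by (rule integrable.intros)

lemma integrable_position: "integrable lborel (\<lambda>q. (\<Omega> q)\<^sup>2 * q)"
  using integrable_mult_of_square_integrable[of "\<lambda>q. q * \<Omega> q" lborel \<Omega>]
    integrable_position_sq integrable_amplitude_sq
  by (simp add: power_mult_distrib power2_eq_square mult_ac)

lemma integrable_position_position: "integrable lborel (\<lambda>q. (\<Omega> q)\<^sup>2 * (q * q))"
  using integrable_position_sq by (simp add: power2_eq_square mult_ac)

lemma integrable_amplitude_derivative: "integrable lborel (\<lambda>q. \<Omega> q * \<Omega>' q)"
  by (rule integrable_mult_of_square_integrable) (simp_all add: integrable_amplitude_sq integrable_derivative_sq)

lemma integrable_position_amplitude_derivative: "integrable lborel (\<lambda>q. q * \<Omega> q * \<Omega>' q)"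
  using integrable_mult_of_square_integrable[of "\<lambda>q. q * \<Omega> q" lborel \<Omega>']
    integrable_position_sq integrable_derivative_sq
  by (simp add: power_mult_distrib mult_ac)

lemma integral_amplitude_derivative: "(LINT q|lborel. \<Omega> q * \<Omega>' q) = 0"
proof (rule integral_lborel_vector_derivative_eq_0)
  show "((\<lambda>q. (\<Omega> q)\<^sup>2 / 2) has_vector_derivative \<Omega> q * \<Omega>' q) (at q)" for q
    unfolding has_real_derivative_iff_has_vector_derivative[symmetric]
    by (auto intro!: derivative_eq_intros has_derivative_amplitude)
qed (simp_all add: integrable_amplitude_derivative integrable_amplitude_sq)

lemma integral_position_amplitude_derivative: "(LINT q|lborel. q * \<Omega> q * \<Omega>' q) = - 1 / 2"
proof -
  have "(LINT q|lborel. (\<Omega> q)\<^sup>2 + 2 * (q * \<Omega> q * \<Omega>' q)) = 0"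
  proof (rule integral_lborel_vector_derivative_eq_0)
    show "((\<lambda>q. (\<Omega> q)\<^sup>2 * q) has_vector_derivative (\<Omega> q)\<^sup>2 + 2 * (q * \<Omega> q * \<Omega>' q)) (at q)" for q
      unfolding has_real_derivative_iff_has_vector_derivative[symmetric]
      by (auto intro!: derivative_eq_intros has_derivative_amplitude simp: power2_eq_square algebra_simps)
  qed (simp_all add: integrable_amplitude_sq integrable_position_amplitude_derivative integrable_position)
  then show ?thesis
    using has_bochner_integral_integral_eq[OF normalized]
    by (simp add: integrable_amplitude_sq integrable_position_amplitude_derivative)
qed

(* Cauchy-Schwarz for (q - <q>) \<Omega> and \<Omega>', whose inner product is -1/2. *)
lemma amplitude_uncertainty: "1 / 4 \<le> cov_Omega \<Omega> (\<lambda>q. q) (\<lambda>q. q) * (LINT q|lborel. (\<Omega>' q)\<^sup>2)"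
proof -
  define a where "a = mean_Omega \<Omega> (\<lambda>q. q)"
  have "has_bochner_integral lborel (\<lambda>q. ((q - a) * \<Omega> q)\<^sup>2) (cov_Omega \<Omega> (\<lambda>q. q) (\<lambda>q. q))"
    using has_bochner_integral_cov_Omega[OF normalized integrable_position integrable_position
        integrable_position_position, unfolded power2_eq_square[symmetric]]
    unfolding a_def .
  moreover have "has_bochner_integral lborel (\<lambda>q. ((q - a) * \<Omega> q) * \<Omega>' q) (- 1 / 2 - a * 0)"
  proof -
    have "has_bochner_integral lborel (\<lambda>q. q * \<Omega> q * \<Omega>' q - a * (\<Omega> q * \<Omega>' q)) (- 1 / 2 - a * 0)"
      unfolding integral_position_amplitude_derivative[symmetric] integral_amplitude_derivative[symmetric]
      by (intro has_bochner_integral_diff has_bochner_integral_mult_right has_bochner_integral_integrable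
          integrable_amplitude_derivative integrable_position_amplitude_derivative)
    then show ?thesis by (simp add: algebra_simps)
  qed
  moreover have "has_bochner_integral lborel (\<lambda>q. (\<Omega>' q)\<^sup>2) (LINT q|lborel. (\<Omega>' q)\<^sup>2)"
    by (rule has_bochner_integral_integrable[OF integrable_derivative_sq])
  ultimately have "(- 1 / 2 - a * 0)\<^sup>2 \<le> cov_Omega \<Omega> (\<lambda>q. q) (\<lambda>q. q) * (LINT q|lborel. (\<Omega>' q)\<^sup>2)"
    by (rule has_bochner_integral_Cauchy_Schwarz)
  then show ?thesis
    by (simp add: power2_eq_square)
qed

end

lemma integral_cnj_mult_second_derivative:
  fixes \<psi> \<psi>' \<psi>'' :: "real \<Rightarrow> complex"
  assumes \<psi>': "\<And>x. (\<psi> has_vector_derivative \<psi>' x) (at x)"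
    and \<psi>'': "\<And>x. (\<psi>' has_vector_derivative \<psi>'' x) (at x)"
    and "integrable lborel (\<lambda>x. cnj (\<psi> x) * \<psi>'' x)"
    and "integrable lborel (\<lambda>x. (norm (\<psi> x))\<^sup>2)" "integrable lborel (\<lambda>x. (norm (\<psi>' x))\<^sup>2)"
  shows "(LINT x|lborel. cnj (\<psi> x) * \<psi>'' x) = - of_real (LINT x|lborel. (norm (\<psi>' x))\<^sup>2)"
proof -
  have continuous: "continuous_on UNIV \<psi>" "continuous_on UNIV \<psi>'"
    using \<psi>' \<psi>'' by (metis continuous_on_vector_derivative has_vector_derivative_at_within)+
  then have [measurable]: "\<psi> \<in> borel_measurable borel" "\<psi>' \<in> borel_measurable borel"
    by (simp_all add: borel_measurable_continuous_onI)
  have bound: "integrable lborel (\<lambda>x. norm (\<psi> x) * norm (\<psi>' x))"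
    by (rule integrable_mult_of_square_integrable) (use assms(4,5) in simp_all)
  have F: "integrable lborel (\<lambda>x. cnj (\<psi> x) * \<psi>' x)"
  proof (rule Bochner_Integration.integrable_bound[OF bound])
    show "(\<lambda>x. cnj (\<psi> x) * \<psi>' x) \<in> borel_measurable lborel"
      using continuous by (simp add: borel_measurable_continuous_onI continuous_intros)
  qed (simp add: norm_mult)
  have norm_sq: "integrable lborel (\<lambda>x. complex_of_real ((norm (\<psi>' x))\<^sup>2))"
    using assms(5) by (rule integrable_of_real)
  have "(LINT x|lborel. cnj (\<psi> x) * \<psi>'' x + of_real ((norm (\<psi>' x))\<^sup>2)) = 0"
  proof (rule integral_lborel_vector_derivative_eq_0)
    show "((\<lambda>x. cnj (\<psi> x) * \<psi>' x) has_vector_derivative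
        cnj (\<psi> x) * \<psi>'' x + of_real ((norm (\<psi>' x))\<^sup>2)) (at x)" for x
    proof -
      have eq: "cnj (\<psi> x) * \<psi>'' x + cnj (\<psi>' x) * \<psi>' x
          = cnj (\<psi> x) * \<psi>'' x + of_real ((norm (\<psi>' x))\<^sup>2)"
        by (simp only: complex_norm_square mult.commute)
      show ?thesis
        using has_vector_derivative_mult[OF has_vector_derivative_cnj[OF \<psi>'[of x]] \<psi>''[of x]]
        unfolding eq .
    qed
  qed (use F norm_sq assms(3) in simp_all)
  then show ?thesis
    by (simp add: Bochner_Integration.integral_add[OF assms(3) norm_sq] eq_neg_iff_add_eq_0
        del: of_real_power)
qed

lemma integral_of_real_add_i_mult:
  fixes f g :: "'a \<Rightarrow> real"
  assumes "integrable M f" "integrable M g"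
  shows "(\<integral>x. of_real (f x) + \<i> * of_real (g x) \<partial>M) = of_real (\<integral>x. f x \<partial>M) + \<i> * of_real (\<integral>x. g x \<partial>M)"
  using assms by (simp add: Bochner_Integration.integral_add integrable_of_real)

definition phase :: "real \<Rightarrow> (real \<Rightarrow> real) \<Rightarrow> real \<Rightarrow> complex" where
  "phase hbar S q = exp (\<i> * complex_of_real (S q / hbar))"

lemma wavefun_eq_phase: "wavefun hbar \<Omega> S q = of_real (\<Omega> q) * phase hbar S q"
  by (simp add: wavefun_def phase_def)

lemma norm_phase: "norm (phase hbar S q) = 1"
  by (simp add: phase_def norm_exp_i_times)

lemma cnj_mult_phase: "cnj (x * phase hbar S q) * (y * phase hbar S q) = cnj x * y"
proof -
  have "cnj (phase hbar S q) * phase hbar S q = 1"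
    by (simp add: phase_def exp_cnj exp_add[symmetric])
  then show ?thesis
    by (simp add: ac_simps)
qed

lemma has_vector_derivative_mult_phase:
  assumes f: "(f has_vector_derivative f') (at q)" and S: "(S has_real_derivative s) (at q)"
  shows "((\<lambda>q. f q * phase hbar S q) has_vector_derivative
    (f' + \<i> * of_real (s / hbar) * f q) * phase hbar S q) (at q)"
proof -
  have "((\<lambda>q. \<i> * complex_of_real (S q / hbar)) has_vector_derivative \<i> * of_real (s / hbar)) (at q)"
    by (intro derivative_intros DERIV_cdivide S)
  from field_vector_diff_chain_at[OF this DERIV_exp]
  have "(phase hbar S has_vector_derivative \<i> * of_real (s / hbar) * phase hbar S q) (at q)"
    by (simp add: phase_def[abs_def] o_def)
  from has_vector_derivative_mult[OF f this] show ?thesis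
    by (simp add: algebra_simps)
qed

definition wavefun_deriv :: "real \<Rightarrow> (real \<Rightarrow> real) \<Rightarrow> (real \<Rightarrow> real) \<Rightarrow> real \<Rightarrow> complex" where
  "wavefun_deriv hbar \<Omega> S q =
    (of_real (deriv \<Omega> q) + \<i> * of_real (\<Omega> q * deriv S q / hbar)) * phase hbar S q"

definition wavefun_deriv2 :: "real \<Rightarrow> (real \<Rightarrow> real) \<Rightarrow> (real \<Rightarrow> real) \<Rightarrow> real \<Rightarrow> complex" where
  "wavefun_deriv2 hbar \<Omega> S q =
    (of_real (deriv (deriv \<Omega>) q - \<Omega> q * (deriv S q / hbar)\<^sup>2)
      + \<i> * of_real ((2 * deriv \<Omega> q * deriv S q + \<Omega> q * deriv (deriv S) q) / hbar)) * phase hbar S q"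

lemma norm_wavefun_sq: "(norm (wavefun hbar \<Omega> S q))\<^sup>2 = (\<Omega> q)\<^sup>2"
  by (simp add: wavefun_eq_phase norm_mult norm_phase)

lemma norm_wavefun_deriv_sq:
  "(norm (wavefun_deriv hbar \<Omega> S q))\<^sup>2 = (deriv \<Omega> q)\<^sup>2 + (\<Omega> q * deriv S q / hbar)\<^sup>2"
  by (simp add: wavefun_deriv_def norm_mult norm_phase cmod_power2)

lemma cnj_wavefun_mult_wavefun: "cnj (wavefun hbar \<Omega> S q) * wavefun hbar \<Omega> S q = of_real ((\<Omega> q)\<^sup>2)"
  unfolding wavefun_eq_phase cnj_mult_phase by (simp add: power2_eq_square)

lemma cnj_wavefun_mult_wavefun_deriv:
  "cnj (wavefun hbar \<Omega> S q) * wavefun_deriv hbar \<Omega> S q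
    = of_real (\<Omega> q * deriv \<Omega> q) + \<i> * of_real ((\<Omega> q)\<^sup>2 * deriv S q / hbar)"
  unfolding wavefun_eq_phase wavefun_deriv_def cnj_mult_phase
  by (simp add: complex_eq_iff power2_eq_square)

lemma cnj_wavefun_mult_wavefun_deriv2:
  "cnj (wavefun hbar \<Omega> S q) * wavefun_deriv2 hbar \<Omega> S q
    = of_real (\<Omega> q * deriv (deriv \<Omega>) q - (\<Omega> q * deriv S q / hbar)\<^sup>2)
      + \<i> * of_real (\<Omega> q * (2 * deriv \<Omega> q * deriv S q + \<Omega> q * deriv (deriv S) q) / hbar)"
  unfolding wavefun_eq_phase wavefun_deriv2_def cnj_mult_phase
  by (simp add: complex_eq_iff power2_eq_square algebra_simps)

locale twice_differentiable_polar =
  fixes \<Omega> S :: "real \<Rightarrow> real"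
  assumes differentiable_amplitude: "\<And>q. \<Omega> differentiable at q"
    and differentiable_deriv_amplitude: "\<And>q. deriv \<Omega> differentiable at q"
    and differentiable_phase: "\<And>q. S differentiable at q"
    and differentiable_deriv_phase: "\<And>q. deriv S differentiable at q"
begin

lemma has_real_derivative_amplitude: "(\<Omega> has_real_derivative deriv \<Omega> q) (at q)"
  and has_real_derivative_deriv_amplitude: "(deriv \<Omega> has_real_derivative deriv (deriv \<Omega>) q) (at q)"
  and has_real_derivative_phase: "(S has_real_derivative deriv S q) (at q)"
  and has_real_derivative_deriv_phase: "(deriv S has_real_derivative deriv (deriv S) q) (at q)"
  using differentiable_amplitude differentiable_deriv_amplitude differentiable_phase
    differentiable_deriv_phase
  by (simp_all add: DERIV_deriv_iff_real_differentiable)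

lemma continuous_deriv_amplitude: "continuous_on UNIV (deriv \<Omega>)"
  and continuous_deriv_phase: "continuous_on UNIV (deriv S)"
  by (auto intro!: continuous_at_imp_continuous_on DERIV_isCont
      has_real_derivative_deriv_amplitude has_real_derivative_deriv_phase)

lemma has_vector_derivative_wavefun:
  "(wavefun hbar \<Omega> S has_vector_derivative wavefun_deriv hbar \<Omega> S q) (at q)"
proof -
  have "((\<lambda>q. of_real (\<Omega> q) * phase hbar S q) has_vector_derivative
      (of_real (deriv \<Omega> q) + \<i> * of_real (deriv S q / hbar) * of_real (\<Omega> q)) * phase hbar S q) (at q)"
    by (intro has_vector_derivative_mult_phase has_vector_derivative_of_real
        has_real_derivative_amplitude has_real_derivative_phase)
  then show ?thesis
    unfolding wavefun_eq_phase[abs_def] wavefun_deriv_def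
    by (rule has_vector_derivative_eq_rhs) (simp add: complex_eq_iff)
qed

lemma has_vector_derivative_wavefun_deriv:
  "(wavefun_deriv hbar \<Omega> S has_vector_derivative wavefun_deriv2 hbar \<Omega> S q) (at q)"
proof -
  have "((\<lambda>q. (of_real (deriv \<Omega> q) + \<i> * of_real (\<Omega> q * deriv S q / hbar)) * phase hbar S q)
      has_vector_derivative
      (of_real (deriv (deriv \<Omega>) q) + \<i> * of_real ((deriv \<Omega> q * deriv S q + deriv (deriv S) q * \<Omega> q) / hbar)
       + \<i> * of_real (deriv S q / hbar) * (of_real (deriv \<Omega> q) + \<i> * of_real (\<Omega> q * deriv S q / hbar)))
      * phase hbar S q) (at q)"
    by (intro has_vector_derivative_mult_phase has_vector_derivative_add
        has_vector_derivative_mult_right has_vector_derivative_of_real DERIV_cdivide DERIV_mult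
        has_real_derivative_amplitude has_real_derivative_deriv_amplitude
        has_real_derivative_phase has_real_derivative_deriv_phase)
  then show ?thesis
    unfolding wavefun_deriv_def[abs_def] wavefun_deriv2_def
    by (rule has_vector_derivative_eq_rhs)
       (simp add: complex_eq_iff power2_eq_square algebra_simps add_divide_distrib)
qed

lemma pop_wavefun: "pop hbar (wavefun hbar \<Omega> S) q = - \<i> * of_real hbar * wavefun_deriv hbar \<Omega> S q"
  by (simp add: pop_def vector_derivative_at[OF has_vector_derivative_wavefun])

lemma pop_pop_wavefun:
  "pop hbar (pop hbar (wavefun hbar \<Omega> S)) q = - of_real (hbar\<^sup>2) * wavefun_deriv2 hbar \<Omega> S q"
proof -
  have "((\<lambda>q. - \<i> * of_real hbar * wavefun_deriv hbar \<Omega> S q) has_vector_derivative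
      - \<i> * of_real hbar * wavefun_deriv2 hbar \<Omega> S q) (at q)"
    by (intro has_vector_derivative_mult_right has_vector_derivative_wavefun_deriv)
  then show ?thesis
    by (simp add: pop_def pop_wavefun[abs_def] vector_derivative_at complex_eq_iff power2_eq_square)
qed

lemma pop_qop_wavefun:
  "pop hbar (qop (wavefun hbar \<Omega> S)) q
    = - \<i> * of_real hbar * (of_real q * wavefun_deriv hbar \<Omega> S q + wavefun hbar \<Omega> S q)"
proof -
  have "((\<lambda>q. of_real q * wavefun hbar \<Omega> S q) has_vector_derivative
      of_real q * wavefun_deriv hbar \<Omega> S q + of_real 1 * wavefun hbar \<Omega> S q) (at q)"
    by (intro has_vector_derivative_mult has_vector_derivative_of_real DERIV_ident
        has_vector_derivative_wavefun)
  then show ?thesis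
    by (simp add: pop_def qop_def[abs_def] vector_derivative_at)
qed

lemma integrable_cnj_wavefun_mult_pop_pop:
  assumes "integrable lborel (\<lambda>q. \<Omega> q * deriv (deriv \<Omega>) q - (\<Omega> q * deriv S q / hbar)\<^sup>2)"
    and "integrable lborel (\<lambda>q. \<Omega> q * (2 * deriv \<Omega> q * deriv S q + \<Omega> q * deriv (deriv S) q) / hbar)"
  shows "integrable lborel (\<lambda>q. cnj (wavefun hbar \<Omega> S q) * pop hbar (pop hbar (wavefun hbar \<Omega> S)) q)"
proof -
  have "cnj (wavefun hbar \<Omega> S q) * pop hbar (pop hbar (wavefun hbar \<Omega> S)) q
      = - of_real (hbar\<^sup>2) * (cnj (wavefun hbar \<Omega> S q) * wavefun_deriv2 hbar \<Omega> S q)" for q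
    by (simp add: pop_pop_wavefun mult_ac)
  then show ?thesis
    unfolding cnj_wavefun_mult_wavefun_deriv2
    by (simp only:) (intro integrable_mult_right Bochner_Integration.integrable_add integrable_of_real assms)
qed

end

locale admissible_state =
  fixes hbar :: real and \<Omega> S :: "real \<Rightarrow> real"
  assumes hbar_pos: "hbar > 0" and admissible: "admissible hbar \<Omega> S"

sublocale admissible_state \<subseteq> twice_differentiable_polar \<Omega> S
  using admissible by unfold_locales (auto simp: admissible_def)

context admissible_state
begin

lemma integrable_norm_wavefun_deriv_sq:
  "integrable lborel (\<lambda>q. (deriv \<Omega> q)\<^sup>2 + (\<Omega> q * deriv S q / hbar)\<^sup>2)"
  using admissible
  by (simp add: admissible_def vector_derivative_at[OF has_vector_derivative_wavefun]
      norm_wavefun_deriv_sq)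

lemma integrable_deriv_amplitude_sq: "integrable lborel (\<lambda>q. (deriv \<Omega> q)\<^sup>2)"
proof (rule Bochner_Integration.integrable_bound[OF integrable_norm_wavefun_deriv_sq])
  show "(\<lambda>q. (deriv \<Omega> q)\<^sup>2) \<in> borel_measurable lborel"
    using continuous_deriv_amplitude by (simp add: borel_measurable_continuous_onI continuous_intros)
qed auto

end

sublocale admissible_state \<subseteq> normalized_amplitude \<Omega> "deriv \<Omega>"
  using admissible has_real_derivative_amplitude continuous_deriv_amplitude integrable_deriv_amplitude_sq
  by unfold_locales (auto simp: admissible_def)

context admissible_state
begin

lemma borel_measurable_deriv_phase [measurable]: "deriv S \<in> borel_measurable borel"
  using continuous_deriv_phase by (rule borel_measurable_continuous_onI)

lemma integrable_phase_deriv_sq: "integrable lborel (\<lambda>q. (\<Omega> q)\<^sup>2 * (deriv S q * deriv S q))"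
proof -
  have "(\<lambda>q. (\<Omega> q)\<^sup>2 * (deriv S q * deriv S q))
      = (\<lambda>q. hbar\<^sup>2 * ((deriv \<Omega> q)\<^sup>2 + (\<Omega> q * deriv S q / hbar)\<^sup>2) - hbar\<^sup>2 * (deriv \<Omega> q)\<^sup>2)"
    using hbar_pos by (simp add: fun_eq_iff power_divide power_mult_distrib power2_eq_square algebra_simps)
  then show ?thesis
    using integrable_norm_wavefun_deriv_sq integrable_deriv_amplitude_sq by simp
qed

lemma integrable_phase_deriv: "integrable lborel (\<lambda>q. (\<Omega> q)\<^sup>2 * deriv S q)"
  using integrable_mult_of_square_integrable[of \<Omega> lborel "\<lambda>q. \<Omega> q * deriv S q"]
    integrable_amplitude_sq integrable_phase_deriv_sq
  by (simp add: power_mult_distrib power2_eq_square mult_ac)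

lemma integrable_position_phase_deriv: "integrable lborel (\<lambda>q. (\<Omega> q)\<^sup>2 * (q * deriv S q))"
  using integrable_mult_of_square_integrable[of "\<lambda>q. q * \<Omega> q" lborel "\<lambda>q. \<Omega> q * deriv S q"]
    integrable_position_sq integrable_phase_deriv_sq
  by (simp add: power_mult_distrib power2_eq_square mult_ac)

abbreviation (input) \<psi> where "\<psi> \<equiv> wavefun hbar \<Omega> S"

lemma expect_qop: "expect \<psi> qop = of_real (mean_Omega \<Omega> (\<lambda>q. q))"
proof -
  have "cnj (\<psi> q) * qop \<psi> q = of_real ((\<Omega> q)\<^sup>2 * q)" for q
    using cnj_wavefun_mult_wavefun[of hbar \<Omega> S q] by (simp add: qop_def mult_ac)
  then show ?thesis
    unfolding expect_def mean_Omega_def by (simp only: integral_complex_of_real)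
qed

lemma expect_qop_qop: "expect \<psi> (\<lambda>f. qop (qop f)) = of_real (mean_Omega \<Omega> (\<lambda>q. q * q))"
proof -
  have "cnj (\<psi> q) * qop (qop \<psi>) q = of_real ((\<Omega> q)\<^sup>2 * (q * q))" for q
    using cnj_wavefun_mult_wavefun[of hbar \<Omega> S q] by (simp add: qop_def mult_ac)
  then show ?thesis
    unfolding expect_def mean_Omega_def by (simp only: integral_complex_of_real)
qed

lemma expect_pop: "expect \<psi> (pop hbar) = of_real (mean_Omega \<Omega> (deriv S))"
proof -
  have "cnj (\<psi> q) * pop hbar \<psi> q = - \<i> * of_real hbar * (cnj (\<psi> q) * wavefun_deriv hbar \<Omega> S q)" for q
    by (simp add: pop_wavefun mult_ac)
  also have "\<dots> q = of_real ((\<Omega> q)\<^sup>2 * deriv S q) + \<i> * of_real (- hbar * (\<Omega> q * deriv \<Omega> q))" for q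
    unfolding cnj_wavefun_mult_wavefun_deriv using hbar_pos by (simp add: complex_eq_iff)
  finally have "expect \<psi> (pop hbar) = of_real (mean_Omega \<Omega> (deriv S))
      + \<i> * of_real (LINT q|lborel. - hbar * (\<Omega> q * deriv \<Omega> q))"
    unfolding expect_def mean_Omega_def
    by (simp only: integral_of_real_add_i_mult integrable_phase_deriv integrable_mult_right
        integrable_amplitude_derivative)
  then show ?thesis
    by (simp add: integral_amplitude_derivative)
qed

lemma expect_pop_pop:
  "expect \<psi> (\<lambda>f. pop hbar (pop hbar f))
    = of_real (hbar\<^sup>2 * (LINT q|lborel. (deriv \<Omega> q)\<^sup>2) + mean_Omega \<Omega> (\<lambda>q. deriv S q * deriv S q))"
proof -
  have pointwise: "cnj (\<psi> q) * pop hbar (pop hbar \<psi>) q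
      = - of_real (hbar\<^sup>2) * (cnj (\<psi> q) * wavefun_deriv2 hbar \<Omega> S q)" for q
    by (simp add: pop_pop_wavefun mult_ac)
  have "integrable lborel (\<lambda>q. - 1 / of_real (hbar\<^sup>2) * (cnj (\<psi> q) * pop hbar (pop hbar \<psi>) q))"
    using admissible unfolding admissible_def by (intro integrable_mult_right) simp
  then have "integrable lborel (\<lambda>q. cnj (\<psi> q) * wavefun_deriv2 hbar \<Omega> S q)"
    unfolding pointwise using hbar_pos by simp
  then have "(LINT q|lborel. cnj (\<psi> q) * wavefun_deriv2 hbar \<Omega> S q)
      = - of_real (LINT q|lborel. (norm (wavefun_deriv hbar \<Omega> S q))\<^sup>2)"
    by (intro integral_cnj_mult_second_derivative has_vector_derivative_wavefun
        has_vector_derivative_wavefun_deriv)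
       (simp_all add: norm_wavefun_sq norm_wavefun_deriv_sq integrable_amplitude_sq
         integrable_norm_wavefun_deriv_sq)
  also have "(LINT q|lborel. (norm (wavefun_deriv hbar \<Omega> S q))\<^sup>2)
      = (LINT q|lborel. (deriv \<Omega> q)\<^sup>2) + mean_Omega \<Omega> (\<lambda>q. deriv S q * deriv S q) / hbar\<^sup>2"
  proof -
    have "(\<lambda>q. (norm (wavefun_deriv hbar \<Omega> S q))\<^sup>2)
        = (\<lambda>q. (deriv \<Omega> q)\<^sup>2 + (\<Omega> q)\<^sup>2 * (deriv S q * deriv S q) / hbar\<^sup>2)"
      by (simp add: fun_eq_iff norm_wavefun_deriv_sq power_divide power_mult_distrib
          flip: power2_eq_square)
    then show ?thesis
      by (simp add: mean_Omega_def integrable_deriv_amplitude_sq integrable_phase_deriv_sq)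
  qed
  finally have second_moment: "(LINT q|lborel. cnj (\<psi> q) * wavefun_deriv2 hbar \<Omega> S q)
      = - of_real ((LINT q|lborel. (deriv \<Omega> q)\<^sup>2) + mean_Omega \<Omega> (\<lambda>q. deriv S q * deriv S q) / hbar\<^sup>2)" .
  have "expect \<psi> (\<lambda>f. pop hbar (pop hbar f))
      = - of_real (hbar\<^sup>2) * (LINT q|lborel. cnj (\<psi> q) * wavefun_deriv2 hbar \<Omega> S q)"
    unfolding expect_def pointwise by (rule integral_mult_right_zero)
  also have "\<dots> = of_real (hbar\<^sup>2 * ((LINT q|lborel. (deriv \<Omega> q)\<^sup>2)
      + mean_Omega \<Omega> (\<lambda>q. deriv S q * deriv S q) / hbar\<^sup>2))"
    unfolding second_moment by (simp only: of_real_mult mult_minus_left mult_minus_right minus_minus)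
  also have "hbar\<^sup>2 * ((LINT q|lborel. (deriv \<Omega> q)\<^sup>2) + mean_Omega \<Omega> (\<lambda>q. deriv S q * deriv S q) / hbar\<^sup>2)
      = hbar\<^sup>2 * (LINT q|lborel. (deriv \<Omega> q)\<^sup>2) + mean_Omega \<Omega> (\<lambda>q. deriv S q * deriv S q)"
    using hbar_pos by (simp add: field_simps)
  finally show ?thesis .
qed

lemma expect_qp_sym:
  "expect \<psi> (\<lambda>f q. qop (pop hbar f) q + pop hbar (qop f) q)
    = of_real (2 * mean_Omega \<Omega> (\<lambda>q. q * deriv S q))"
proof -
  have "cnj (\<psi> q) * (qop (pop hbar \<psi>) q + pop hbar (qop \<psi>) q)
      = - \<i> * of_real hbar * (2 * of_real q * (cnj (\<psi> q) * wavefun_deriv hbar \<Omega> S q)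
          + cnj (\<psi> q) * \<psi> q)" for q
    by (simp add: qop_def pop_wavefun pop_qop_wavefun algebra_simps)
  also have "\<dots> q = of_real (2 * ((\<Omega> q)\<^sup>2 * (q * deriv S q)))
      + \<i> * of_real (- hbar * ((\<Omega> q)\<^sup>2 + 2 * (q * \<Omega> q * deriv \<Omega> q)))" for q
    unfolding cnj_wavefun_mult_wavefun_deriv cnj_wavefun_mult_wavefun
    using hbar_pos by (simp add: complex_eq_iff algebra_simps power2_eq_square)
  finally have "expect \<psi> (\<lambda>f q. qop (pop hbar f) q + pop hbar (qop f) q)
      = of_real (2 * mean_Omega \<Omega> (\<lambda>q. q * deriv S q))
        + \<i> * of_real (- hbar * (LINT q|lborel. (\<Omega> q)\<^sup>2 + 2 * (q * \<Omega> q * deriv \<Omega> q)))"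
    unfolding expect_def mean_Omega_def
    by (simp only: integral_of_real_add_i_mult integrable_position_phase_deriv integrable_mult_right
        integral_mult_right_zero Bochner_Integration.integrable_add integrable_amplitude_sq
        integrable_position_amplitude_derivative)
  also have "(LINT q|lborel. (\<Omega> q)\<^sup>2 + 2 * (q * \<Omega> q * deriv \<Omega> q)) = 0"
    using has_bochner_integral_integral_eq[OF normalized] integral_position_amplitude_derivative
    by (simp add: integrable_amplitude_sq integrable_position_amplitude_derivative)
  finally show ?thesis
    by simp
qed

lemma varq_wavefun: "varq \<psi> = of_real (cov_Omega \<Omega> (\<lambda>q. q) (\<lambda>q. q))"
  by (simp add: varq_def expect_qop_qop expect_qop cov_Omega_def power2_eq_square)

lemma varp_wavefun:
  "varp hbar \<psi> = of_real (hbar\<^sup>2 * (LINT q|lborel. (deriv \<Omega> q)\<^sup>2) + cov_Omega \<Omega> (deriv S) (deriv S))"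
  by (simp add: varp_def expect_pop_pop expect_pop cov_Omega_def power2_eq_square)

lemma covqp_wavefun: "covqp hbar \<psi> = of_real (cov_Omega \<Omega> (\<lambda>q. q) (deriv S))"
  by (simp add: covqp_def expect_qp_sym expect_qop expect_pop cov_Omega_def)

lemma cov_position_phase_deriv_sq_le:
  "(cov_Omega \<Omega> (\<lambda>q. q) (deriv S))\<^sup>2
    \<le> cov_Omega \<Omega> (\<lambda>q. q) (\<lambda>q. q) * cov_Omega \<Omega> (deriv S) (deriv S)"
  by (rule cov_Omega_sq_le[OF normalized integrable_position integrable_phase_deriv
        integrable_position_position integrable_phase_deriv_sq integrable_position_phase_deriv])

lemma strengthened_uncertainty:
  "0 \<le> varp hbar \<psi> * varq \<psi> - of_real (cov_dS \<Omega> S) * varq \<psi> - of_real (hbar\<^sup>2 / 4)"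
proof -
  have "hbar\<^sup>2 * (1 / 4) \<le> hbar\<^sup>2 * (cov_Omega \<Omega> (\<lambda>q. q) (\<lambda>q. q) * (LINT q|lborel. (deriv \<Omega> q)\<^sup>2))"
    using amplitude_uncertainty by (intro mult_left_mono) simp_all
  then show ?thesis
    by (simp add: varp_wavefun varq_wavefun cov_dS_eq_cov_Omega less_eq_complex_def algebra_simps)
qed

lemma strengthened_uncertainty_le_Robertson_Schroedinger:
  "varp hbar \<psi> * varq \<psi> - of_real (cov_dS \<Omega> S) * varq \<psi> - of_real (hbar\<^sup>2 / 4)
    \<le> varq \<psi> * varp hbar \<psi> - (covqp hbar \<psi>)\<^sup>2 - of_real (hbar\<^sup>2 / 4)"
  using cov_position_phase_deriv_sq_le
  by (simp add: varp_wavefun varq_wavefun covqp_wavefun cov_dS_eq_cov_Omega less_eq_complex_def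
      algebra_simps)

end

definition gaussian_amplitude :: "real \<Rightarrow> real" where
  "gaussian_amplitude q = exp (- q\<^sup>2 / 4) / sqrt (sqrt (2 * pi))"

definition cubic_phase :: "real \<Rightarrow> real" where
  "cubic_phase q = q ^ 3 / 3"

lemma gaussian_amplitude_sq: "(gaussian_amplitude q)\<^sup>2 = std_normal_density q"
proof -
  have "(exp (- q\<^sup>2 / 4))\<^sup>2 = exp (- q\<^sup>2 / 2)"
    by (simp flip: exp_add add: power2_eq_square)
  then show ?thesis
    by (simp add: gaussian_amplitude_def std_normal_density_def power_divide)
qed

lemma has_real_derivative_gaussian_amplitude:
  "(gaussian_amplitude has_real_derivative - q / 2 * gaussian_amplitude q) (at q)"
  unfolding gaussian_amplitude_def[abs_def]
  by (auto intro!: derivative_eq_intros simp: field_simps power2_eq_square)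

lemma has_real_derivative_deriv_gaussian_amplitude:
  "((\<lambda>q. - q / 2 * gaussian_amplitude q) has_real_derivative (q\<^sup>2 / 4 - 1 / 2) * gaussian_amplitude q) (at q)"
  by (auto intro!: derivative_eq_intros has_real_derivative_gaussian_amplitude
      simp: field_simps power2_eq_square)

lemma deriv_gaussian_amplitude: "deriv gaussian_amplitude = (\<lambda>q. - q / 2 * gaussian_amplitude q)"
  by (rule ext) (rule DERIV_imp_deriv[OF has_real_derivative_gaussian_amplitude])

lemma deriv_deriv_gaussian_amplitude:
  "deriv (deriv gaussian_amplitude) = (\<lambda>q. (q\<^sup>2 / 4 - 1 / 2) * gaussian_amplitude q)"
  unfolding deriv_gaussian_amplitude
  by (rule ext) (rule DERIV_imp_deriv[OF has_real_derivative_deriv_gaussian_amplitude])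

lemma has_real_derivative_cubic_phase: "(cubic_phase has_real_derivative q\<^sup>2) (at q)"
  unfolding cubic_phase_def[abs_def] by (auto intro!: derivative_eq_intros simp: power2_eq_square)

lemma has_real_derivative_deriv_cubic_phase: "((\<lambda>q. q\<^sup>2) has_real_derivative 2 * q) (at q)"
  by (auto intro!: derivative_eq_intros)

lemma deriv_cubic_phase: "deriv cubic_phase = (\<lambda>q. q\<^sup>2)"
  by (rule ext) (rule DERIV_imp_deriv[OF has_real_derivative_cubic_phase])

lemma deriv_deriv_cubic_phase: "deriv (deriv cubic_phase) = (\<lambda>q. 2 * q)"
  unfolding deriv_cubic_phase
  by (rule ext) (rule DERIV_imp_deriv[OF has_real_derivative_deriv_cubic_phase])

lemma twice_differentiable_polar_gaussian_cubic:
  "twice_differentiable_polar gaussian_amplitude cubic_phase"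
  unfolding twice_differentiable_polar_def deriv_gaussian_amplitude deriv_cubic_phase real_differentiable_def
  using has_real_derivative_gaussian_amplitude has_real_derivative_deriv_gaussian_amplitude
    has_real_derivative_cubic_phase has_real_derivative_deriv_cubic_phase
  by blast

lemma integrable_std_normal_monomial: "integrable lborel (\<lambda>x. std_normal_density x * (c * x ^ k))"
  using integrable_mult_right[OF integrable_std_normal_moment, of c k] by (simp add: mult_ac)

lemma admissible_gaussian_cubic: "admissible hbar gaussian_amplitude cubic_phase"
proof -
  interpret twice_differentiable_polar gaussian_amplitude cubic_phase
    by (rule twice_differentiable_polar_gaussian_cubic)
  note second_derivs = deriv_deriv_gaussian_amplitude deriv_deriv_cubic_phase
  note first_derivs = deriv_gaussian_amplitude deriv_cubic_phase
  have "continuous_on UNIV (deriv (deriv gaussian_amplitude))"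
    unfolding deriv_deriv_gaussian_amplitude gaussian_amplitude_def by (intro continuous_intros) auto
  moreover have "continuous_on UNIV (deriv (deriv cubic_phase))"
    unfolding deriv_deriv_cubic_phase by (intro continuous_intros)
  moreover have "has_bochner_integral lborel (\<lambda>q. (gaussian_amplitude q)\<^sup>2) 1"
    using std_normal_moment_even[of 0] by (simp add: gaussian_amplitude_sq)
  moreover have "(gaussian_amplitude \<longlongrightarrow> 0) at_top" "(gaussian_amplitude \<longlongrightarrow> 0) at_bot"
    unfolding gaussian_amplitude_def[abs_def] by real_asymp+
  moreover have "integrable lborel (\<lambda>q. q\<^sup>2 * (gaussian_amplitude q)\<^sup>2)"
    using integrable_std_normal_monomial[of 1 2] by (simp add: gaussian_amplitude_sq mult_ac)
  moreover have "integrable lborel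
      (\<lambda>q. (norm (vector_derivative (wavefun hbar gaussian_amplitude cubic_phase) (at q)))\<^sup>2)"
  proof -
    have "(norm (vector_derivative (wavefun hbar gaussian_amplitude cubic_phase) (at q)))\<^sup>2
        = std_normal_density q * (1 / 4 * q ^ 2) + std_normal_density q * (1 / hbar\<^sup>2 * q ^ 4)" for q
      unfolding vector_derivative_at[OF has_vector_derivative_wavefun] norm_wavefun_deriv_sq first_derivs
        gaussian_amplitude_sq[symmetric]
      by (simp add: power2_eq_square power4_eq_xxxx field_simps)
    then show ?thesis
      by (simp only:) (intro Bochner_Integration.integrable_add integrable_std_normal_monomial)
  qed
  moreover have "integrable lborel (\<lambda>q. cnj (wavefun hbar gaussian_amplitude cubic_phase q)
      * pop hbar (pop hbar (wavefun hbar gaussian_amplitude cubic_phase)) q)"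
  proof (rule integrable_cnj_wavefun_mult_pop_pop)
    have "gaussian_amplitude q * deriv (deriv gaussian_amplitude) q
          - (gaussian_amplitude q * deriv cubic_phase q / hbar)\<^sup>2
        = std_normal_density q * (1 / 4 * q ^ 2) - std_normal_density q * (1 / 2 * q ^ 0)
          - std_normal_density q * (1 / hbar\<^sup>2 * q ^ 4)" for q
      unfolding second_derivs unfolding first_derivs gaussian_amplitude_sq[symmetric]
      by (simp add: power2_eq_square power4_eq_xxxx field_simps)
    then show "integrable lborel (\<lambda>q. gaussian_amplitude q * deriv (deriv gaussian_amplitude) q
        - (gaussian_amplitude q * deriv cubic_phase q / hbar)\<^sup>2)"
      by (simp only:) (intro Bochner_Integration.integrable_diff integrable_std_normal_monomial)
    have "gaussian_amplitude q * (2 * deriv gaussian_amplitude q * deriv cubic_phase q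
          + gaussian_amplitude q * deriv (deriv cubic_phase) q) / hbar
        = std_normal_density q * (2 / hbar * q ^ 1) - std_normal_density q * (1 / hbar * q ^ 3)" for q
      unfolding second_derivs unfolding first_derivs gaussian_amplitude_sq[symmetric]
      by (simp add: power2_eq_square power3_eq_cube algebra_simps diff_divide_distrib add_divide_distrib)
    then show "integrable lborel (\<lambda>q. gaussian_amplitude q * (2 * deriv gaussian_amplitude q
        * deriv cubic_phase q + gaussian_amplitude q * deriv (deriv cubic_phase) q) / hbar)"
      by (simp only:) (intro Bochner_Integration.integrable_diff integrable_std_normal_monomial)
  qed
  ultimately show ?thesis
    unfolding admissible_def
    using differentiable_amplitude differentiable_deriv_amplitude differentiable_phase
      differentiable_deriv_phase by blast
qed

lemma cov_Omega_gaussian_cubic: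
  shows "cov_Omega gaussian_amplitude (\<lambda>q. q) (\<lambda>q. q) = 1"
    and "cov_Omega gaussian_amplitude (deriv cubic_phase) (deriv cubic_phase) = 2"
    and "cov_Omega gaussian_amplitude (\<lambda>q. q) (deriv cubic_phase) = 0"
proof -
  have moment: "mean_Omega gaussian_amplitude f = m"
    if "has_bochner_integral lborel (\<lambda>q. std_normal_density q * q ^ k) m" and "\<And>q. q ^ k = f q"
    for f k m
    using has_bochner_integral_integral_eq[OF that(1)] that(2)
    by (simp add: mean_Omega_def gaussian_amplitude_sq)
  have "mean_Omega gaussian_amplitude (\<lambda>q. q) = 0"
    using moment[OF std_normal_moment_odd[of 0], of "\<lambda>q. q"] by simp
  moreover have "mean_Omega gaussian_amplitude (\<lambda>q. q * q) = 1"
    using moment[OF std_normal_moment_even[of 1], of "\<lambda>q. q * q"] by (simp add: power2_eq_square)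
  moreover have "mean_Omega gaussian_amplitude (\<lambda>q. q\<^sup>2) = 1"
    using moment[OF std_normal_moment_even[of 1], of "\<lambda>q. q\<^sup>2"] by simp
  moreover have "mean_Omega gaussian_amplitude (\<lambda>q. q * q\<^sup>2) = 0"
    using moment[OF std_normal_moment_odd[of 1], of "\<lambda>q. q * q\<^sup>2"] by (simp add: power2_eq_square power3_eq_cube)
  moreover have "mean_Omega gaussian_amplitude (\<lambda>q. q\<^sup>2 * q\<^sup>2) = 3"
    using moment[OF std_normal_moment_even[of 2], of "\<lambda>q. q\<^sup>2 * q\<^sup>2"]
    by (simp add: power2_eq_square power4_eq_xxxx fact_numeral)
  ultimately show "cov_Omega gaussian_amplitude (\<lambda>q. q) (\<lambda>q. q) = 1"
    and "cov_Omega gaussian_amplitude (deriv cubic_phase) (deriv cubic_phase) = 2"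
    and "cov_Omega gaussian_amplitude (\<lambda>q. q) (deriv cubic_phase) = 0"
    by (simp_all add: cov_Omega_def deriv_cubic_phase)
qed

lemma gaussian_cubic_strengthened_uncertainty_less:
  assumes "hbar > 0"
  shows "varp hbar (wavefun hbar gaussian_amplitude cubic_phase) * varq (wavefun hbar gaussian_amplitude cubic_phase)
      - of_real (cov_dS gaussian_amplitude cubic_phase) * varq (wavefun hbar gaussian_amplitude cubic_phase)
      - of_real (hbar\<^sup>2 / 4)
    < varq (wavefun hbar gaussian_amplitude cubic_phase) * varp hbar (wavefun hbar gaussian_amplitude cubic_phase)
      - (covqp hbar (wavefun hbar gaussian_amplitude cubic_phase))\<^sup>2 - of_real (hbar\<^sup>2 / 4)"
proof -
  interpret admissible_state hbar gaussian_amplitude cubic_phase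
    using assms admissible_gaussian_cubic by unfold_locales
  show ?thesis
    unfolding cov_dS_eq_cov_Omega varq_wavefun covqp_wavefun cov_Omega_gaussian_cubic
    by (simp add: less_complex_def)
qed

theorem theorem4:
  fixes m c \<xi>p hbar :: real and U :: "real \<Rightarrow> real" and \<Omega> S :: "real \<Rightarrow> real"
  assumes "m > 0" and "hbar > 0" and "admissible hbar \<Omega> S"
  shows "(0 \<le> varp hbar (wavefun hbar \<Omega> S) * varq (wavefun hbar \<Omega> S)
              - complex_of_real (cov_dS \<Omega> S) * varq (wavefun hbar \<Omega> S)
              - complex_of_real (hbar\<^sup>2 / 4)) \<and>
         (varp hbar (wavefun hbar \<Omega> S) * varq (wavefun hbar \<Omega> S)
              - complex_of_real (cov_dS \<Omega> S) * varq (wavefun hbar \<Omega> S)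
              - complex_of_real (hbar\<^sup>2 / 4)
         \<le> varq (wavefun hbar \<Omega> S) * varp hbar (wavefun hbar \<Omega> S)
              - (covqp hbar (wavefun hbar \<Omega> S))\<^sup>2 - complex_of_real (hbar\<^sup>2 / 4)) \<and>
         (\<exists>\<Omega>1 S1. admissible hbar \<Omega>1 S1 \<and>
           varp hbar (wavefun hbar \<Omega>1 S1) * varq (wavefun hbar \<Omega>1 S1)
              - complex_of_real (cov_dS \<Omega>1 S1) * varq (wavefun hbar \<Omega>1 S1)
              - complex_of_real (hbar\<^sup>2 / 4)
         < varq (wavefun hbar \<Omega>1 S1) * varp hbar (wavefun hbar \<Omega>1 S1)
              - (covqp hbar (wavefun hbar \<Omega>1 S1))\<^sup>2 - complex_of_real (hbar\<^sup>2 / 4))"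
proof -
  interpret admissible_state hbar \<Omega> S
    using assms(2,3) by unfold_locales
  show ?thesis
    using strengthened_uncertainty strengthened_uncertainty_le_Robertson_Schroedinger
      gaussian_cubic_strengthened_uncertainty_less[OF assms(2)] admissible_gaussian_cubic
    by blast
qed

end
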